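(* Fix one of the six problems minPCA, norm-minPCA, maxRCS, norm-maxRCS, maxRegret, norm-maxRegret, with associated loss $\mathcal{L}\in\{-\mathcal{L}_{\mathrm{var}},-\mathcal{L}_{\mathrm{normVar}},\mathcal{L}_{\mathrm{RCS}},\mathcal{L}_{\mathrm{normRCS}},\mathcal{L}_{\mathrm{reg}},\mathcal{L}_{\mathrm{normReg}}\}$ respectively, and let $\mathcal{Q}=\mathcal{P}$ for the three unnormalized losses and $\mathcal{Q}=\mathcal{P}_{\mathrm{norm}}$ for the three normalized losses. Let $V_k^*\in\arg\min_{V\in\mathcal{O}_{p\times k}}\max_e\mathcal{L}(V;\Sigma_e)$ and $\hat V_k\in\arg\min_{V\in\mathcal{O}_{p\times k}}\max_e\mathcal{L}(V;\hat\Sigma_e)$, and assume the population problem has a solution unique up to right multiplication by a $k\times k$ orthogonal matrix. Let $\hat m_k:=\max_{e\in\mathcal{E}}\mathcal{L}(\hat V_k;\hat\Sigma_e)$ and $n_{\min}=\min_e n_e$. Then as $n_{\min}\to\infty$: (i) $\sup_{P\in\mathcal{Q}}\mathcal{L}(\hat V_k;P)\to\sup_{P\in\mathcal{Q}}\mathcal{L}(V_k^*;P)$ in probability; (ii) for every $\epsilon>0$, $\lim_{n_{\min}\to\infty}\Pr\big(\sup_{P\in\mathcal{Q}}\mathcal{L}(\hat V_k;P)>\hat m_k+\epsilon\big)=0$.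
   Context: $\mathcal{O}_{p\times k}=\{V\in\mathbb{R}^{p\times k}:V^\top V=I_k\}$. Source domains $\mathcal{E}=\{1,\dots,E\}$; for each $e$, $P_e$ is a distribution on $\mathbb{R}^{1\times p}$ with mean zero and finite covariance $\Sigma_e=\mathbb{E}[\mathbf{x}^\top\mathbf{x}]$, $\operatorname{Tr}(\Sigma_e)>0$. $X_e\in\mathbb{R}^{n_e\times p}$ has $n_e$ i.i.d. rows from $P_e$, $\hat\Sigma_e=\frac1{n_e}X_e^\top X_e$, $\operatorname{Tr}(\hat\Sigma_e)>0$. Losses for symmetric PSD $\Sigma$ of positive trace and $V\in\mathcal{O}_{p\times k}$: $\mathcal{L}_{\mathrm{var}}(V;\Sigma)=\operatorname{Tr}(V^\top\Sigma V)$, $\mathcal{L}_{\mathrm{normVar}}=\mathcal{L}_{\mathrm{var}}/\operatorname{Tr}(\Sigma)$, $\mathcal{L}_{\mathrm{RCS}}(V;\Sigma)=\operatorname{Tr}(\Sigma)-\operatorname{Tr}(V^\top\Sigma V)$, $\mathcal{L}_{\mathrm{normRCS}}=\mathcal{L}_{\mathrm{RCS}}/\operatorname{Tr}(\Sigma)$, $\mathcal{L}_{\mathrm{reg}}(V;\Sigma)=\mathcal{L}_{\mathrm{RCS}}(V;\Sigma)-\min_{W\in\mathcal{O}_{p\times k}}\mathcal{L}_{\mathrm{RCS}}(W;\Sigma)$, $\mathcal{L}_{\mathrm{normReg}}(V;\Sigma)=\mathcal{L}_{\mathrm{normRCS}}(V;\Sigma)-\min_W\mathcal{L}_{\mathrm{normRCS}}(W;\Sigma)$;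 for a distribution $P$ with second-moment matrix $\Sigma$, $\mathcal{L}(V;P):=\mathcal{L}(V;\Sigma)$. $\mathcal{P}$ is the set of distributions on $\mathbb{R}^{1\times p}$ with mean zero, finite second moments and $\mathbb{E}_P[\mathbf{x}^\top\mathbf{x}]\in\operatorname{conv}(\{\Sigma_e\}_{e\in\mathcal{E}})$. $\mathcal{P}_{\mathrm{norm}}$ is the set of distributions with mean zero, finite second moments, $\mathbb{E}_P\|\mathbf{x}\|_2^2>0$ and $\mathbb{E}_P[\mathbf{x}^\top\mathbf{x}]/\mathbb{E}_P\|\mathbf{x}\|_2^2\in\operatorname{conv}(\{\Sigma_e/\operatorname{Tr}(\Sigma_e)\}_{e\in\mathcal{E}})$. *)

theory Defs
  imports "HOL-Probability.Probability"
begin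

text \<open>Points of R^{1 x p} are vectors of type real^'p; p x k matrices are real^'k^'p.\<close>

definition orth_frames :: "(real^'k^'p) set" where
  "orth_frames = {V. transpose V ** V = mat 1}"

definition L_var :: "real^'k^'p \<Rightarrow> real^'p^'p \<Rightarrow> real" where
  "L_var V S = trace (transpose V ** S ** V)"

definition L_normVar :: "real^'k^'p \<Rightarrow> real^'p^'p \<Rightarrow> real" where
  "L_normVar V S = L_var V S / trace S"

definition L_RCS :: "real^'k^'p \<Rightarrow> real^'p^'p \<Rightarrow> real" where
  "L_RCS V S = trace S - trace (transpose V ** S ** V)"

definition L_normRCS :: "real^'k^'p \<Rightarrow> real^'p^'p \<Rightarrow> real" where
  "L_normRCS V S = L_RCS V S / trace S"

definition L_reg :: "real^'k^'p \<Rightarrow> real^'p^'p \<Rightarrow> real" where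
  "L_reg V S = L_RCS V S - (INF W\<in>(orth_frames :: (real^'k^'p) set). L_RCS W S)"

definition L_normReg :: "real^'k^'p \<Rightarrow> real^'p^'p \<Rightarrow> real" where
  "L_normReg V S = L_normRCS V S - (INF W\<in>(orth_frames :: (real^'k^'p) set). L_normRCS W S)"

datatype problem = MinPCA | NormMinPCA | MaxRCS | NormMaxRCS | MaxRegret | NormMaxRegret

fun loss :: "problem \<Rightarrow> real^'k^'p \<Rightarrow> real^'p^'p \<Rightarrow> real" where
  "loss MinPCA V S = - L_var V S"
| "loss NormMinPCA V S = - L_normVar V S"
| "loss MaxRCS V S = L_RCS V S"
| "loss NormMaxRCS V S = L_normRCS V S"
| "loss MaxRegret V S = L_reg V S"
| "loss NormMaxRegret V S = L_normReg V S"

fun normalized :: "problem \<Rightarrow> bool" where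
  "normalized MinPCA = False"
| "normalized NormMinPCA = True"
| "normalized MaxRCS = False"
| "normalized NormMaxRCS = True"
| "normalized MaxRegret = False"
| "normalized NormMaxRegret = True"

definition outer :: "real^'p \<Rightarrow> real^'p^'p" where
  "outer x = (\<chi> i j. x$i * x$j)"

definition second_moment :: "(real^'p) measure \<Rightarrow> real^'p^'p" where
  "second_moment P = (\<chi> i j. integral\<^sup>L P (\<lambda>x. x$i * x$j))"

definition centered_L2_dist :: "(real^'p) measure \<Rightarrow> bool" where
  "centered_L2_dist P \<longleftrightarrow> sets P = sets borel \<and> prob_space P \<and>
     integrable P (\<lambda>x. x) \<and> integral\<^sup>L P (\<lambda>x. x) = 0 \<and>
     integrable P (\<lambda>x. (norm x)\<^sup>2)"

definition Pset :: "('e \<Rightarrow> real^'p^'p) \<Rightarrow> (real^'p) measure set" where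
  "Pset Sig = {P. centered_L2_dist P \<and> second_moment P \<in> convex hull (range Sig)}"

definition Pnorm :: "('e \<Rightarrow> real^'p^'p) \<Rightarrow> (real^'p) measure set" where
  "Pnorm Sig = {P. centered_L2_dist P \<and> integral\<^sup>L P (\<lambda>x. (norm x)\<^sup>2) > 0 \<and>
     (1 / integral\<^sup>L P (\<lambda>x. (norm x)\<^sup>2)) *\<^sub>R second_moment P
       \<in> convex hull (range (\<lambda>e. (1 / trace (Sig e)) *\<^sub>R Sig e))}"

definition Qset :: "problem \<Rightarrow> ('e \<Rightarrow> real^'p^'p) \<Rightarrow> (real^'p) measure set" where
  "Qset pr Sig = (if normalized pr then Pnorm Sig else Pset Sig)"

definition worst_risk :: "problem \<Rightarrow> ('e \<Rightarrow> real^'p^'p) \<Rightarrow> real^'k^'p \<Rightarrow> real" where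
  "worst_risk pr Sig V = (SUP P\<in>Qset pr Sig. loss pr V (second_moment P))"

definition worst_domain_loss :: "problem \<Rightarrow> ('e::finite \<Rightarrow> real^'p^'p) \<Rightarrow> real^'k^'p \<Rightarrow> real" where
  "worst_domain_loss pr Sig V = (MAX e. loss pr V (Sig e))"

definition minmax_solutions :: "problem \<Rightarrow> ('e::finite \<Rightarrow> real^'p^'p) \<Rightarrow> (real^'k^'p) set" where
  "minmax_solutions pr Sig = {V :: real^'k^'p. V \<in> orth_frames \<and> (\<forall>W :: real^'k^'p. W \<in> orth_frames \<longrightarrow>
      worst_domain_loss pr Sig V \<le> worst_domain_loss pr Sig W)}"

text \<open>Data for sample sizes n: for each domain e the rows X_e(i), i < n e.
  The sample distribution makes all rows independent with row distribution P e.\<close>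
definition sample_space :: "('e::finite \<Rightarrow> (real^'p) measure) \<Rightarrow> ('e \<Rightarrow> nat) \<Rightarrow>
    ('e \<Rightarrow> nat \<Rightarrow> real^'p) measure" where
  "sample_space P n = PiM UNIV (\<lambda>e. PiM {..<n e} (\<lambda>_. P e))"

definition sample_cov :: "nat \<Rightarrow> (nat \<Rightarrow> real^'p) \<Rightarrow> real^'p^'p" where
  "sample_cov m X = (1 / real m) *\<^sub>R (\<Sum>i<m. outer (X i))"

end

(*
  For an orthonormal frame V the worst-case risk over the uncertainty set equals the largest loss
  over the source domains: after rescaling covariances to unit trace in the normalized problems,
  each loss is a convex function of the second-moment matrix (linear for the variance and the
  reconstruction error, linear minus an infimum of linear functions for the regret), so its
  supremum over the convex hull of the domain matrices is attained at a domain.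

  By the weak law of large numbers every entry of every sample covariance converges in
  probability. The losses are Lipschitz in the covariance uniformly in V, and the rescaling is
  continuous wherever the trace is positive, so with probability tending to one the empirical
  and population objectives are uniformly epsilon-close. The empirical minimax solution is then
  2 epsilon-optimal for the population objective, and its population risk exceeds its empirical
  objective by at most epsilon.
*)
theory Submission
  imports Defs
begin

section \<open>Weak law of large numbers\<close>

definition sample_mean :: "('a \<Rightarrow> real) \<Rightarrow> nat \<Rightarrow> (nat \<Rightarrow> 'a) \<Rightarrow> real" where
  "sample_mean f m x = (\<Sum>i<m. f (x i)) / real m"

lemma indep_vars_PiM_coordinates:
  assumes M: "prob_space M" and I: "finite I" "I \<noteq> {}"
  shows "prob_space.indep_vars (PiM I (\<lambda>_. M)) (\<lambda>_. M) (\<lambda>i x. x i) I"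
proof -
  interpret P: prob_space "PiM I (\<lambda>_. M)" by (intro prob_space_PiM M)
  have "distr (PiM I (\<lambda>_. M)) (PiM I (\<lambda>_. M)) (\<lambda>x. \<lambda>i\<in>I. x i)
      = distr (PiM I (\<lambda>_. M)) (PiM I (\<lambda>_. M)) (\<lambda>x. x)"
    by (intro distr_cong) (auto simp: space_PiM PiE_def extensional_restrict)
  also have "\<dots> = PiM I (\<lambda>_. M)" by (rule distr_id)
  also have "\<dots> = PiM I (\<lambda>i. distr (PiM I (\<lambda>_. M)) M (\<lambda>x. x i))"
    using distr_PiM_component[of I "\<lambda>_. M"] M by (intro PiM_cong) auto
  finally show ?thesis
    by (subst P.indep_vars_iff_distr_eq_PiM'[OF I(2)]) auto
qed

lemma
  fixes f :: "'a \<Rightarrow> real"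
  assumes M: "prob_space M" and i: "i \<in> I"
  shows integrable_PiM_coordinate: "integrable M f \<Longrightarrow> integrable (PiM I (\<lambda>_. M)) (\<lambda>x. f (x i))"
    and integral_PiM_coordinate:
      "f \<in> borel_measurable M \<Longrightarrow> (\<integral>x. f (x i) \<partial>PiM I (\<lambda>_. M)) = integral\<^sup>L M f"
    and distr_PiM_coordinate:
      "f \<in> borel_measurable M \<Longrightarrow> distr (PiM I (\<lambda>_. M)) borel (\<lambda>x. f (x i)) = distr M borel f"
proof -
  have distr: "distr (PiM I (\<lambda>_. M)) M (\<lambda>x. x i) = M"
    using distr_PiM_component[of I "\<lambda>_. M" i] M i by auto
  show "integrable (PiM I (\<lambda>_. M)) (\<lambda>x. f (x i))" if "integrable M f"
    using that i by (subst integrable_distr_eq[symmetric]) (auto simp: distr)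
  show "(\<integral>x. f (x i) \<partial>PiM I (\<lambda>_. M)) = integral\<^sup>L M f" if "f \<in> borel_measurable M"
    using that i by (subst integral_distr[symmetric]) (auto simp: distr)
  show "distr (PiM I (\<lambda>_. M)) borel (\<lambda>x. f (x i)) = distr M borel f" if "f \<in> borel_measurable M"
    using that i by (subst distr[symmetric], subst distr_distr) (auto simp: comp_def)
qed

lemma Hoeffding_ineq_iid_PiM:
  fixes g :: "'a \<Rightarrow> real" and m :: nat
  assumes M: "prob_space M" and g: "g \<in> borel_measurable M" and "\<And>x. g x \<in> {a..b}" and "m > 0"
  shows "Hoeffding_ineq_iid (PiM {..<m} (\<lambda>_. M)) {..<m} (\<lambda>i x. g (x i)) (\<lambda>x. g (x 0)) a b"
proof -
  interpret prob_space "PiM {..<m} (\<lambda>_. M)" by (rule prob_space_PiM[OF M])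
  show ?thesis
  proof unfold_locales
    have "{..<m} \<noteq> {}" using \<open>m > 0\<close> by auto
    with g show "indep_vars (\<lambda>_. borel) (\<lambda>i x. g (x i)) {..<m}"
      using indep_vars_compose2[OF indep_vars_PiM_coordinates[OF M finite_lessThan[of m] \<open>{..<m} \<noteq> {}\<close>], of "\<lambda>_. g" "\<lambda>_. borel"]
      by simp
    show "distr (PiM {..<m} (\<lambda>_. M)) borel (\<lambda>x. g (x i))
        = distr (PiM {..<m} (\<lambda>_. M)) borel (\<lambda>x. g (x 0))" if "i \<in> {..<m}" for i
      using that \<open>m > 0\<close> g by (simp add: distr_PiM_coordinate[OF M])
    show "(\<lambda>x. g (x 0)) \<in> borel_measurable (PiM {..<m} (\<lambda>_. M))"
      using \<open>m > 0\<close> by (intro measurable_compose[OF measurable_component_singleton[of 0] g]) simp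
  qed (use assms(3) in simp_all)
qed

lemma weak_law_large_numbers_bounded:
  fixes g :: "'a \<Rightarrow> real"
  assumes M: "prob_space M" and g: "g \<in> borel_measurable M"
    and bounded: "\<And>x. g x \<in> {a..b}" and "a < b" and \<epsilon>: "\<epsilon> > 0"
  shows "(\<lambda>m. measure (PiM {..<m} (\<lambda>_. M))
           {x \<in> space (PiM {..<m} (\<lambda>_. M)). \<epsilon> \<le> \<bar>sample_mean g m x - integral\<^sup>L M g\<bar>}) \<longlonglongrightarrow> 0"
proof (rule tendsto_sandwich[where f = "\<lambda>_. 0"])
  define q where "q = 2 * \<epsilon>\<^sup>2 / (b - a)\<^sup>2"
  have "q > 0" using \<epsilon> \<open>a < b\<close> by (simp add: q_def)
  then show "(\<lambda>m. 2 * exp (- real m * q)) \<longlonglongrightarrow> 0" by real_asymp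
  show "\<forall>\<^sub>F m in sequentially. measure (PiM {..<m} (\<lambda>_. M))
      {x \<in> space (PiM {..<m} (\<lambda>_. M)). \<epsilon> \<le> \<bar>sample_mean g m x - integral\<^sup>L M g\<bar>} \<le> 2 * exp (- real m * q)"
    using eventually_gt_at_top[of 0]
  proof eventually_elim
    case (elim m)
    interpret Hoeffding_ineq_iid "PiM {..<m} (\<lambda>_. M)" "{..<m}" "\<lambda>i x. g (x i)" "\<lambda>x. g (x 0)"
      a b "integral\<^sup>L M g"
      by (rule Hoeffding_ineq_iid_PiM[OF M g bounded elim])
         (use elim g in \<open>simp add: integral_PiM_coordinate[OF M]\<close>)
    show ?case
      using Hoeffding_ineq_abs_ge'[of \<epsilon>] \<epsilon> \<open>a < b\<close> elim
      by (simp add: sample_mean_def q_def mult_ac lessThan_empty_iff)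
  qed
qed (auto intro: measure_nonneg)

lemma integral_truncation_tail_tendsto:
  fixes f :: "'a \<Rightarrow> real"
  assumes f: "integrable M f"
  shows "(\<lambda>j. \<integral>x. max 0 (\<bar>f x\<bar> - real j) \<partial>M) \<longlonglongrightarrow> 0"
proof -
  have "(\<lambda>j. \<integral>x. max 0 (\<bar>f x\<bar> - real j) \<partial>M) \<longlonglongrightarrow> (\<integral>x. 0 \<partial>M)"
  proof (rule integral_dominated_convergence[where w = "\<lambda>x. \<bar>f x\<bar>"])
    show "AE x in M. (\<lambda>j. max 0 (\<bar>f x\<bar> - real j)) \<longlonglongrightarrow> 0"
      by (intro AE_I2) real_asymp
  qed (use f in auto)
  then show ?thesis by simp
qed

lemma sample_mean_Markov:
  fixes h :: "'a \<Rightarrow> real"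
  assumes M: "prob_space M" and h: "integrable M h" "\<And>x. 0 \<le> h x" and t: "t > 0"
  shows "measure (PiM {..<m} (\<lambda>_. M)) {x \<in> space (PiM {..<m} (\<lambda>_. M)). t \<le> sample_mean h m x}
         \<le> integral\<^sup>L M h / t"
proof -
  have integrable: "integrable (PiM {..<m} (\<lambda>_. M)) (sample_mean h m)"
    unfolding sample_mean_def
    by (intro integrable_divide Bochner_Integration.integrable_sum integrable_PiM_coordinate[OF M] h) simp
  have "measure (PiM {..<m} (\<lambda>_. M)) {x \<in> space (PiM {..<m} (\<lambda>_. M)). t \<le> sample_mean h m x}
         \<le> (\<integral>x. sample_mean h m x \<partial>PiM {..<m} (\<lambda>_. M)) / t"
    by (rule integral_Markov_inequality_measure[OF integrable _ _ t, where A = "space (PiM {..<m} (\<lambda>_. M))"])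
       (use h in \<open>auto intro!: AE_I2 divide_nonneg_nonneg sum_nonneg simp: sample_mean_def\<close>)
  also have "\<dots> \<le> integral\<^sup>L M h / t"
  proof (intro divide_right_mono less_imp_le[OF t], cases "m = 0")
    case False
    then show "(\<integral>x. sample_mean h m x \<partial>PiM {..<m} (\<lambda>_. M)) \<le> integral\<^sup>L M h"
      using h by (simp add: sample_mean_def integral_PiM_coordinate[OF M] integrable_PiM_coordinate[OF M])
  qed (simp add: sample_mean_def h integral_nonneg)
  finally show ?thesis .
qed

lemma abs_sample_mean_diff_le:
  assumes "\<And>y. \<bar>f y - g y\<bar> \<le> h y"
  shows "\<bar>sample_mean f m x - sample_mean g m x\<bar> \<le> sample_mean h m x"
proof -
  have "\<bar>sample_mean f m x - sample_mean g m x\<bar> = \<bar>\<Sum>i<m. f (x i) - g (x i)\<bar> / real m"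
    by (simp add: sample_mean_def diff_divide_distrib[symmetric] sum_subtractf)
  also have "\<dots> \<le> sample_mean h m x"
    unfolding sample_mean_def using assms by (intro divide_right_mono order_trans[OF sum_abs] sum_mono) auto
  finally show ?thesis .
qed

lemma sample_mean_deviation_le:
  fixes f g h :: "'a \<Rightarrow> real"
  assumes M: "prob_space M" and [measurable]: "f \<in> borel_measurable M" "g \<in> borel_measurable M"
    and h: "integrable M h" "\<And>y. 0 \<le> h y" and fgh: "\<And>y. \<bar>f y - g y\<bar> \<le> h y"
    and Efg: "\<bar>integral\<^sup>L M f - integral\<^sup>L M g\<bar> \<le> integral\<^sup>L M h" and small: "integral\<^sup>L M h < \<eta> / 3"
  shows "measure (PiM {..<m} (\<lambda>_. M))
           {x \<in> space (PiM {..<m} (\<lambda>_. M)). \<eta> < \<bar>sample_mean f m x - integral\<^sup>L M f\<bar>}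
         \<le> measure (PiM {..<m} (\<lambda>_. M))
           {x \<in> space (PiM {..<m} (\<lambda>_. M)). \<eta> / 3 \<le> \<bar>sample_mean g m x - integral\<^sup>L M g\<bar>}
           + integral\<^sup>L M h / (\<eta> / 3)"
proof -
  interpret prob_space "PiM {..<m} (\<lambda>_. M)" by (rule prob_space_PiM[OF M])
  have [measurable]: "h \<in> borel_measurable M" using h(1) by auto
  have "0 \<le> integral\<^sup>L M h" by (simp add: h(2) integral_nonneg)
  with small have "\<eta> > 0" by linarith
  have "\<eta> / 3 \<le> \<bar>sample_mean g m x - integral\<^sup>L M g\<bar> \<or> \<eta> / 3 \<le> sample_mean h m x"
    if "\<eta> < \<bar>sample_mean f m x - integral\<^sup>L M f\<bar>" for x
    using that abs_sample_mean_diff_le[of f g h m x, OF fgh] Efg small by linarith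
  then have "{x \<in> space (PiM {..<m} (\<lambda>_. M)). \<eta> < \<bar>sample_mean f m x - integral\<^sup>L M f\<bar>}
      \<subseteq> {x \<in> space (PiM {..<m} (\<lambda>_. M)). \<eta> / 3 \<le> \<bar>sample_mean g m x - integral\<^sup>L M g\<bar>}
        \<union> {x \<in> space (PiM {..<m} (\<lambda>_. M)). \<eta> / 3 \<le> sample_mean h m x}"
    by blast
  then have "measure (PiM {..<m} (\<lambda>_. M))
      {x \<in> space (PiM {..<m} (\<lambda>_. M)). \<eta> < \<bar>sample_mean f m x - integral\<^sup>L M f\<bar>}
    \<le> measure (PiM {..<m} (\<lambda>_. M))
      {x \<in> space (PiM {..<m} (\<lambda>_. M)). \<eta> / 3 \<le> \<bar>sample_mean g m x - integral\<^sup>L M g\<bar>}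
      + measure (PiM {..<m} (\<lambda>_. M)) {x \<in> space (PiM {..<m} (\<lambda>_. M)). \<eta> / 3 \<le> sample_mean h m x}"
    by (intro order_trans[OF finite_measure_mono measure_Un_le]) (auto simp: sample_mean_def)
  also have "\<dots> \<le> measure (PiM {..<m} (\<lambda>_. M))
      {x \<in> space (PiM {..<m} (\<lambda>_. M)). \<eta> / 3 \<le> \<bar>sample_mean g m x - integral\<^sup>L M g\<bar>}
      + integral\<^sup>L M h / (\<eta> / 3)"
    using \<open>\<eta> > 0\<close> by (intro add_left_mono sample_mean_Markov[OF M h]) simp
  finally show ?thesis .
qed

text \<open>Truncating \<open>f\<close> at a level \<open>j\<close>: the truncated part obeys the bounded law, while the tail
  \<open>max 0 (\<bar>f\<bar> - j)\<close> has small mean and is controlled by Markov's inequality.\<close>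

lemma weak_law_large_numbers:
  fixes f :: "'a \<Rightarrow> real"
  assumes M: "prob_space M" and f: "integrable M f" and \<eta>: "\<eta> > 0"
  shows "(\<lambda>m. measure (PiM {..<m} (\<lambda>_. M))
           {x \<in> space (PiM {..<m} (\<lambda>_. M)). \<eta> < \<bar>sample_mean f m x - integral\<^sup>L M f\<bar>}) \<longlonglongrightarrow> 0"
proof (rule order_tendstoI)
  fix \<delta> :: real assume \<delta>: "\<delta> > 0"
  obtain j :: nat where "j \<ge> 1"
    and small: "(\<integral>x. max 0 (\<bar>f x\<bar> - real j) \<partial>M) < min (\<eta> / 3) (\<eta> * \<delta> / 6)"
    using eventually_conj[OF eventually_ge_at_top[of 1]
          order_tendstoD(2)[OF integral_truncation_tail_tendsto[OF f], of "min (\<eta> / 3) (\<eta> * \<delta> / 6)"]]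
      \<eta> \<delta> by (auto simp: eventually_sequentially)
  define trunc where "trunc x = max (- real j) (min (real j) (f x))" for x
  define tail where "tail x = max 0 (\<bar>f x\<bar> - real j)" for x
  have [measurable]: "f \<in> borel_measurable M" using f by auto
  have f_trunc: "\<bar>f x - trunc x\<bar> = tail x" for x
    by (auto simp: trunc_def tail_def)
  have tail: "integrable M tail" "integral\<^sup>L M tail < min (\<eta> / 3) (\<eta> * \<delta> / 6)"
    using small by (auto simp: tail_def[abs_def] intro: Bochner_Integration.integrable_bound[OF integrable_abs[OF f]])
  have trunc: "integrable M trunc" "trunc \<in> borel_measurable M"
    by (auto simp: trunc_def[abs_def] intro: Bochner_Integration.integrable_bound[OF integrable_abs[OF f]])
  have Efg: "\<bar>integral\<^sup>L M f - integral\<^sup>L M trunc\<bar> \<le> integral\<^sup>L M tail"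
    using integral_abs_bound[of M "\<lambda>x. f x - trunc x"] f trunc by (simp add: f_trunc)
  have "\<forall>\<^sub>F m in sequentially. measure (PiM {..<m} (\<lambda>_. M)) {x \<in> space (PiM {..<m} (\<lambda>_. M)).
          \<eta> / 3 \<le> \<bar>sample_mean trunc m x - integral\<^sup>L M trunc\<bar>} < \<delta> / 2"
    using \<eta> \<delta> \<open>j \<ge> 1\<close> trunc(2)
    by (intro order_tendstoD(2)[OF weak_law_large_numbers_bounded[OF M, where a = "- real j" and b = "real j"]])
       (auto simp: trunc_def)
  then show "\<forall>\<^sub>F m in sequentially. measure (PiM {..<m} (\<lambda>_. M))
      {x \<in> space (PiM {..<m} (\<lambda>_. M)). \<eta> < \<bar>sample_mean f m x - integral\<^sup>L M f\<bar>} < \<delta>"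
  proof eventually_elim
    case (elim m)
    have "integral\<^sup>L M tail / (\<eta> / 3) < \<delta> / 2"
      using tail(2) \<eta> by (simp add: field_simps)
    with elim sample_mean_deviation_le[OF M _ trunc(2) tail(1) _ _ Efg, where m = m and \<eta> = \<eta>] tail(2)
    show ?case by (force simp: tail_def f_trunc)
  qed
qed (auto intro!: always_eventually less_le_trans[OF _ measure_nonneg])

section \<open>Asymptotically negligible events\<close>

text \<open>Limits along this filter are the limits \<open>n_min \<rightarrow> \<infinity>\<close> of the paper.\<close>

definition min_size_at_top :: "('e::finite \<Rightarrow> nat) filter" where
  "min_size_at_top = filtercomap (\<lambda>n. Min (range n)) at_top"

lemma eventually_min_size_at_top:
  "eventually Q min_size_at_top \<longleftrightarrow> (\<exists>N. \<forall>n. (\<forall>e. N \<le> n e) \<longrightarrow> Q n)"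
  unfolding min_size_at_top_def eventually_filtercomap_at_top_linorder by simp

text \<open>The events \<open>B n\<close> need not be measurable (they involve an arbitrary selection of empirical
  solutions), so they are covered by measurable sets of small probability.\<close>

definition asymptotically_negligible ::
    "('e::finite \<Rightarrow> (real^'p) measure) \<Rightarrow> (('e \<Rightarrow> nat) \<Rightarrow> ('e \<Rightarrow> nat \<Rightarrow> real^'p) \<Rightarrow> bool) \<Rightarrow> bool" where
  "asymptotically_negligible P B \<longleftrightarrow> (\<forall>\<delta>>0. \<forall>\<^sub>F n in min_size_at_top.
     \<exists>C \<in> sets (sample_space P n). {d \<in> space (sample_space P n). B n d} \<subseteq> C \<and>
       measure (sample_space P n) C < \<delta>)"

lemma asymptotically_negligible_mono:
  assumes "asymptotically_negligible P B"
    and "\<And>n d. d \<in> space (sample_space P n) \<Longrightarrow> B' n d \<Longrightarrow> B n d"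
  shows "asymptotically_negligible P B'"
  unfolding asymptotically_negligible_def
proof (intro allI impI)
  fix \<delta> :: real assume "\<delta> > 0"
  with assms(1) have "\<forall>\<^sub>F n in min_size_at_top. \<exists>C \<in> sets (sample_space P n).
      {d \<in> space (sample_space P n). B n d} \<subseteq> C \<and> measure (sample_space P n) C < \<delta>"
    by (simp add: asymptotically_negligible_def)
  then show "\<forall>\<^sub>F n in min_size_at_top. \<exists>C \<in> sets (sample_space P n).
      {d \<in> space (sample_space P n). B' n d} \<subseteq> C \<and> measure (sample_space P n) C < \<delta>"
    by (rule eventually_mono) (use assms(2) in blast)
qed

lemma asymptotically_negligible_Ex:
  fixes B :: "'t::finite \<Rightarrow> ('e::finite \<Rightarrow> nat) \<Rightarrow> ('e \<Rightarrow> nat \<Rightarrow> real^'p) \<Rightarrow> bool"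
  assumes "\<And>t. asymptotically_negligible P (B t)"
  shows "asymptotically_negligible P (\<lambda>n d. \<exists>t. B t n d)"
  unfolding asymptotically_negligible_def
proof (intro allI impI)
  fix \<delta> :: real assume "\<delta> > 0"
  then have "\<forall>\<^sub>F n in min_size_at_top. \<forall>t. \<exists>C \<in> sets (sample_space P n).
      {d \<in> space (sample_space P n). B t n d} \<subseteq> C \<and> measure (sample_space P n) C < \<delta> / CARD('t)"
    using assms by (intro eventually_all_finite) (simp add: asymptotically_negligible_def)
  then show "\<forall>\<^sub>F n in min_size_at_top. \<exists>C \<in> sets (sample_space P n).
      {d \<in> space (sample_space P n). \<exists>t. B t n d} \<subseteq> C \<and> measure (sample_space P n) C < \<delta>"
  proof eventually_elim
    case (elim n)
    then have "\<forall>t. \<exists>C. C \<in> sets (sample_space P n) \<and>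
        {d \<in> space (sample_space P n). B t n d} \<subseteq> C \<and> measure (sample_space P n) C < \<delta> / CARD('t)"
      by blast
    then obtain C where C: "\<And>t. C t \<in> sets (sample_space P n)"
      "\<And>t. {d \<in> space (sample_space P n). B t n d} \<subseteq> C t"
      "\<And>t. measure (sample_space P n) (C t) < \<delta> / CARD('t)"
      using choice[of "\<lambda>t C. C \<in> sets (sample_space P n) \<and>
        {d \<in> space (sample_space P n). B t n d} \<subseteq> C \<and> measure (sample_space P n) C < \<delta> / CARD('t)"]
      by blast
    have "measure (sample_space P n) (\<Union>t. C t) \<le> (\<Sum>t\<in>UNIV. measure (sample_space P n) (C t))"
      using C(1) by (intro measure_UNION_le) auto
    also have "\<dots> < (\<Sum>t\<in>(UNIV :: 't set). \<delta> / CARD('t))"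
      using C(3) by (intro sum_strict_mono) auto
    finally show ?case
      using C(1,2) by (intro bexI[of _ "\<Union>t. C t"]) auto
  qed
qed

lemma measurable_sample_space_component:
  "(\<lambda>d. d e) \<in> measurable (sample_space P n) (PiM {..<n e} (\<lambda>_. P e))"
  unfolding sample_space_def by (rule measurable_component_singleton) simp

lemma measure_sample_space_component_event:
  fixes P :: "'e::finite \<Rightarrow> (real^'p) measure"
  assumes "\<And>e. prob_space (P e)" and "A \<in> sets (PiM {..<n e} (\<lambda>_. P e))"
  shows "measure (sample_space P n) ((\<lambda>d. d e) -` A \<inter> space (sample_space P n))
       = measure (PiM {..<n e} (\<lambda>_. P e)) A"
proof -
  have "distr (sample_space P n) (PiM {..<n e} (\<lambda>_. P e)) (\<lambda>d. d e) = PiM {..<n e} (\<lambda>_. P e)"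
    unfolding sample_space_def by (rule distr_PiM_component) (auto intro: prob_space_PiM assms(1))
  then show ?thesis
    using measure_distr[OF measurable_sample_space_component[of e P n] assms(2)] by simp
qed

lemma asymptotically_negligible_component:
  fixes P :: "'e::finite \<Rightarrow> (real^'p) measure"
  assumes prob: "\<And>e. prob_space (P e)" and A: "\<And>m. A m \<in> sets (PiM {..<m} (\<lambda>_. P e))"
    and lim: "(\<lambda>m. measure (PiM {..<m} (\<lambda>_. P e)) (A m)) \<longlonglongrightarrow> 0"
  shows "asymptotically_negligible P (\<lambda>n d. d e \<in> A (n e))"
  unfolding asymptotically_negligible_def eventually_min_size_at_top
proof (intro allI impI)
  fix \<delta> :: real assume "\<delta> > 0"
  from order_tendstoD(2)[OF lim this] obtain N
    where N: "\<And>m. N \<le> m \<Longrightarrow> measure (PiM {..<m} (\<lambda>_. P e)) (A m) < \<delta>"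
    unfolding eventually_sequentially by blast
  show "\<exists>N. \<forall>n. (\<forall>e. N \<le> n e) \<longrightarrow> (\<exists>C \<in> sets (sample_space P n).
      {d \<in> space (sample_space P n). d e \<in> A (n e)} \<subseteq> C \<and> measure (sample_space P n) C < \<delta>)"
  proof (intro exI allI impI)
    fix n :: "'e \<Rightarrow> nat" assume "\<forall>e. N \<le> n e"
    let ?C = "(\<lambda>d. d e) -` A (n e) \<inter> space (sample_space P n)"
    have "measure (sample_space P n) ?C = measure (PiM {..<n e} (\<lambda>_. P e)) (A (n e))"
      by (rule measure_sample_space_component_event[where P = P and e = e and n = n, OF prob A])
    also have "\<dots> < \<delta>"
      using N \<open>\<forall>e. N \<le> n e\<close> by blast
    finally have "measure (sample_space P n) ?C < \<delta>" .
    moreover have "{d \<in> space (sample_space P n). d e \<in> A (n e)} \<subseteq> ?C"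
      by blast
    moreover have "?C \<in> sets (sample_space P n)"
      by (rule measurable_sets[OF measurable_sample_space_component[of e P n] A])
    ultimately show "\<exists>C \<in> sets (sample_space P n).
        {d \<in> space (sample_space P n). d e \<in> A (n e)} \<subseteq> C \<and> measure (sample_space P n) C < \<delta>"
      by (intro bexI[of _ ?C] conjI)
  qed
qed

lemma asymptotically_negligible_measure:
  fixes P :: "'e::finite \<Rightarrow> (real^'p) measure"
  assumes "\<And>e. prob_space (P e)" and "asymptotically_negligible P B"
  shows "\<forall>\<delta>>0. \<exists>N. \<forall>n. (\<forall>e. N \<le> n e) \<longrightarrow>
           measure (sample_space P n) {d \<in> space (sample_space P n). B n d} < \<delta>"
proof (intro allI impI)
  fix \<delta> :: real assume "\<delta> > 0"
  have "prob_space (sample_space P n)" for n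
    unfolding sample_space_def by (intro prob_space_PiM assms(1))
  have "\<forall>\<^sub>F n in min_size_at_top. \<exists>C \<in> sets (sample_space P n).
      {d \<in> space (sample_space P n). B n d} \<subseteq> C \<and> measure (sample_space P n) C < \<delta>"
    using assms(2) \<open>\<delta> > 0\<close> by (simp add: asymptotically_negligible_def)
  then have "\<forall>\<^sub>F n in min_size_at_top. measure (sample_space P n) {d \<in> space (sample_space P n). B n d} < \<delta>"
  proof (rule eventually_mono)
    fix n assume "\<exists>C \<in> sets (sample_space P n).
      {d \<in> space (sample_space P n). B n d} \<subseteq> C \<and> measure (sample_space P n) C < \<delta>"
    then obtain C where "C \<in> sets (sample_space P n)" "{d \<in> space (sample_space P n). B n d} \<subseteq> C"
      and "measure (sample_space P n) C < \<delta>" by blast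
    then show "measure (sample_space P n) {d \<in> space (sample_space P n). B n d} < \<delta>"
      using finite_measure.finite_measure_mono[OF prob_space.finite_measure[OF \<open>prob_space (sample_space P n)\<close>]]
      by (meson le_less_trans)
  qed
  then show "\<exists>N. \<forall>n. (\<forall>e. N \<le> n e) \<longrightarrow>
      measure (sample_space P n) {d \<in> space (sample_space P n). B n d} < \<delta>"
    unfolding eventually_min_size_at_top .
qed

section \<open>Concentration of sample covariances\<close>

lemma integrable_coordinate_product:
  assumes "centered_L2_dist P"
  shows "integrable P (\<lambda>x. x $ a * x $ b)"
proof (rule Bochner_Integration.integrable_bound)
  show "integrable P (\<lambda>x. (norm x)\<^sup>2)" using assms unfolding centered_L2_dist_def by simp
  have "sets P = sets borel" using assms unfolding centered_L2_dist_def by simp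
  then show "(\<lambda>x. x $ a * x $ b) \<in> borel_measurable P"
    by (subst measurable_cong_sets[OF _ refl]) measurable
  show "AE x in P. norm (x $ a * x $ b) \<le> norm ((norm x)\<^sup>2)"
    by (intro AE_I2) (simp add: abs_mult power2_eq_square mult_mono component_le_norm_cart)
qed

lemma integral_norm_sq_eq_trace:
  assumes "centered_L2_dist P"
  shows "integral\<^sup>L P (\<lambda>x. (norm x)\<^sup>2) = trace (second_moment P)"
proof -
  have "integral\<^sup>L P (\<lambda>x. (norm x)\<^sup>2) = integral\<^sup>L P (\<lambda>x. \<Sum>i\<in>UNIV. x$i * x$i)"
    by (simp add: power2_norm_eq_inner inner_vec_def)
  also have "\<dots> = (\<Sum>i\<in>UNIV. integral\<^sup>L P (\<lambda>x. x$i * x$i))"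
    by (intro Bochner_Integration.integral_sum integrable_coordinate_product[OF assms])
  finally show ?thesis by (simp add: trace_def second_moment_def)
qed

lemma sample_cov_entry: "sample_cov m X $ a $ b = sample_mean (\<lambda>x. x $ a * x $ b) m X"
  by (simp add: sample_cov_def sample_mean_def outer_def sum_component)

lemma norm_le_entry_bound:
  fixes A :: "real^'n^'m"
  assumes "\<And>a b. \<bar>A $ a $ b\<bar> \<le> \<epsilon>"
  shows "norm A \<le> real CARD('m) * real CARD('n) * \<epsilon>"
proof -
  have "norm A \<le> (\<Sum>a\<in>UNIV. norm (A $ a))"
    by (simp add: norm_vec_def L2_set_le_sum)
  also have "\<dots> \<le> (\<Sum>a\<in>(UNIV :: 'm set). \<Sum>b\<in>(UNIV :: 'n set). \<epsilon>)"
    using assms by (intro sum_mono order_trans[OF norm_le_l1_cart]) auto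
  finally show ?thesis by simp
qed

lemma sample_space_component_in_space:
  "d \<in> space (sample_space P n) \<Longrightarrow> d e \<in> space (PiM {..<n e} (\<lambda>_. P e))"
  by (auto simp: sample_space_def space_PiM)

lemma sample_cov_entry_deviation_negligible:
  fixes P :: "'e::finite \<Rightarrow> (real^'p) measure"
  assumes dists: "\<forall>e. centered_L2_dist (P e)" and "\<epsilon> > 0"
  shows "asymptotically_negligible P
           (\<lambda>n d. \<epsilon> < \<bar>sample_cov (n e) (d e) $ a $ b - second_moment (P e) $ a $ b\<bar>)"
proof -
  have prob: "prob_space (P e)" for e using dists by (simp add: centered_L2_dist_def)
  define A where "A m = {x \<in> space (PiM {..<m} (\<lambda>_. P e)).
    \<epsilon> < \<bar>sample_mean (\<lambda>x. x $ a * x $ b) m x - integral\<^sup>L (P e) (\<lambda>x. x $ a * x $ b)\<bar>}" for m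
  have "asymptotically_negligible P (\<lambda>n d. d e \<in> A (n e))"
  proof (rule asymptotically_negligible_component[OF prob])
    have [measurable]: "(\<lambda>x. x $ a * x $ b) \<in> borel_measurable (P e)"
      using integrable_coordinate_product[of "P e" a b] dists by auto
    show "A m \<in> sets (PiM {..<m} (\<lambda>_. P e))" for m
      unfolding A_def sample_mean_def by measurable
    show "(\<lambda>m. measure (PiM {..<m} (\<lambda>_. P e)) (A m)) \<longlonglongrightarrow> 0"
      unfolding A_def using dists \<open>\<epsilon> > 0\<close>
      by (intro weak_law_large_numbers prob integrable_coordinate_product) auto
  qed
  then show ?thesis
    by (rule asymptotically_negligible_mono)
       (simp add: A_def sample_cov_entry second_moment_def sample_space_component_in_space)
qed

lemma sample_cov_deviation_negligible:
  fixes P :: "'e::finite \<Rightarrow> (real^'p) measure"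
  assumes dists: "\<forall>e. centered_L2_dist (P e)" and "\<eta> > 0"
  shows "asymptotically_negligible P (\<lambda>n d. \<exists>e. \<eta> < norm (sample_cov (n e) (d e) - second_moment (P e)))"
proof -
  define \<epsilon> where "\<epsilon> = \<eta> / real CARD('p)^2"
  have "\<epsilon> > 0" using \<open>\<eta> > 0\<close> by (simp add: \<epsilon>_def)
  then have "asymptotically_negligible P
      (\<lambda>n d. \<exists>e a b. \<epsilon> < \<bar>sample_cov (n e) (d e) $ a $ b - second_moment (P e) $ a $ b\<bar>)"
    by (intro asymptotically_negligible_Ex sample_cov_entry_deviation_negligible[OF dists])
  then show ?thesis
  proof (rule asymptotically_negligible_mono)
    fix n d assume "\<exists>e. \<eta> < norm (sample_cov (n e) (d e) - second_moment (P e))"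
    then obtain e where e: "\<eta> < norm (sample_cov (n e) (d e) - second_moment (P e))" by blast
    show "\<exists>e a b. \<epsilon> < \<bar>sample_cov (n e) (d e) $ a $ b - second_moment (P e) $ a $ b\<bar>"
    proof (rule ccontr)
      assume "\<not> ?thesis"
      then have "norm (sample_cov (n e) (d e) - second_moment (P e)) \<le> real CARD('p) * real CARD('p) * \<epsilon>"
        by (intro norm_le_entry_bound) (simp add: not_less)
      with e show False by (simp add: \<epsilon>_def power2_eq_square)
    qed
  qed
qed

section \<open>Losses as functions of the second-moment matrix\<close>

fun unnormalized :: "problem \<Rightarrow> problem" where
  "unnormalized NormMinPCA = MinPCA"
| "unnormalized NormMaxRCS = MaxRCS"
| "unnormalized NormMaxRegret = MaxRegret"
| "unnormalized pr = pr"

lemma not_normalized_unnormalized: "\<not> normalized (unnormalized pr)"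
  by (cases pr) simp_all

definition rescale :: "problem \<Rightarrow> real^'p^'p \<Rightarrow> real^'p^'p" where
  "rescale pr S = (if normalized pr then (1 / trace S) *\<^sub>R S else S)"

lemma trace_scaleR: "trace (c *\<^sub>R S) = c * trace (S :: real^'n^'n)"
  unfolding trace_def by (simp add: sum_distrib_left)

lemma L_var_eq_sum: "L_var V S = (\<Sum>k\<in>UNIV. \<Sum>b\<in>UNIV. \<Sum>a\<in>UNIV. V$a$k * S$a$b * V$b$k)"
  unfolding L_var_def trace_def matrix_matrix_mult_def transpose_def
  by (simp add: sum_distrib_right)

lemma L_var_add: "L_var V (S + T) = L_var V S + L_var V T"
  unfolding L_var_eq_sum by (simp add: sum.distrib[symmetric] algebra_simps)

lemma L_var_diff: "L_var V (S - T) = L_var V S - L_var V T"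
  unfolding L_var_eq_sum by (simp add: sum_subtractf[symmetric] algebra_simps)

lemma L_var_scaleR: "L_var V (c *\<^sub>R S) = c * L_var V S"
  unfolding L_var_eq_sum by (simp add: sum_distrib_left algebra_simps)

lemma L_RCS_eq: "L_RCS V S = trace S - L_var V S"
  by (simp add: L_RCS_def L_var_def)

lemma L_RCS_convex_comb:
  "L_RCS V ((1 - t) *\<^sub>R S + t *\<^sub>R T) = (1 - t) * L_RCS V S + t * L_RCS V T"
  by (simp only: L_RCS_eq L_var_add L_var_scaleR trace_add trace_scaleR) (simp add: algebra_simps)

lemma L_normVar_eq: "L_normVar V S = L_var V ((1 / trace S) *\<^sub>R S)"
  by (simp add: L_normVar_def L_var_scaleR)

lemma L_normRCS_eq: "L_normRCS V S = L_RCS V ((1 / trace S) *\<^sub>R S)"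
  by (simp add: L_normRCS_def L_RCS_eq L_var_scaleR trace_scaleR diff_divide_distrib)

text \<open>Valid also for \<open>trace S = 0\<close>: both sides vanish, as division by zero yields zero.\<close>

lemma loss_rescale: "loss pr V S = loss (unnormalized pr) V (rescale pr S)"
  by (cases pr) (simp_all add: rescale_def L_normVar_eq L_normRCS_eq L_reg_def L_normReg_def)

lemma orth_frames_entry_abs_le:
  assumes "V \<in> orth_frames"
  shows "\<bar>V$a$k\<bar> \<le> 1"
proof -
  have "(transpose V ** V) $ k $ k = 1"
    using assms by (simp add: orth_frames_def mat_def)
  then have "(\<Sum>i\<in>UNIV. V$i$k * V$i$k) = 1"
    by (simp add: matrix_matrix_mult_def transpose_def)
  moreover have "V$a$k * V$a$k \<le> (\<Sum>i\<in>UNIV. V$i$k * V$i$k)"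
    by (rule member_le_sum) auto
  ultimately show ?thesis
    by (metis abs_square_le_1 power2_eq_square)
qed

lemma entry_abs_le_norm: "\<bar>S$a$b\<bar> \<le> norm (S :: real^'n^'m)"
  using component_le_norm_cart[of "S$a" b] Finite_Cartesian_Product.norm_nth_le[of S a] by simp

lemma abs_trace_le: "\<bar>trace S\<bar> \<le> real CARD('n) * norm (S :: real^'n^'n)"
proof -
  have "\<bar>trace S\<bar> \<le> (\<Sum>i\<in>(UNIV::'n set). norm S)"
    unfolding trace_def by (intro order_trans[OF sum_abs] sum_mono entry_abs_le_norm)
  then show ?thesis by simp
qed

lemma abs_L_var_le:
  fixes V :: "real^'k^'p"
  assumes "V \<in> orth_frames"
  shows "\<bar>L_var V S\<bar> \<le> real CARD('k) * real CARD('p)^2 * norm S"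
proof -
  have entry: "\<bar>V$a$k * S$a$b * V$b$k\<bar> \<le> norm S" for a b k
  proof -
    have "\<bar>V$a$k * S$a$b * V$b$k\<bar> = \<bar>V$a$k\<bar> * \<bar>S$a$b\<bar> * \<bar>V$b$k\<bar>" by (simp add: abs_mult)
    also have "\<dots> \<le> 1 * norm S * 1"
      using orth_frames_entry_abs_le[OF assms] entry_abs_le_norm
      by (intro mult_mono) auto
    finally show ?thesis by simp
  qed
  have "\<bar>L_var V S\<bar> \<le> (\<Sum>k\<in>UNIV. \<Sum>b\<in>UNIV. \<Sum>a\<in>UNIV. \<bar>V$a$k * S$a$b * V$b$k\<bar>)"
    unfolding L_var_eq_sum
    by (rule order_trans[OF sum_abs], intro sum_mono, rule order_trans[OF sum_abs],
        intro sum_mono, rule sum_abs)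
  also have "\<dots> \<le> (\<Sum>k\<in>(UNIV::'k set). \<Sum>b\<in>(UNIV::'p set). \<Sum>a\<in>(UNIV::'p set). norm S)"
    by (intro sum_mono entry)
  finally show ?thesis by (simp add: power2_eq_square)
qed

lemma INF_diff_le:
  fixes f g :: "'a \<Rightarrow> real"
  assumes "A \<noteq> {}" "bdd_below (f ` A)" "\<And>x. x \<in> A \<Longrightarrow> \<bar>f x - g x\<bar> \<le> c"
  shows "(INF x\<in>A. f x) - c \<le> (INF x\<in>A. g x)"
proof (rule cINF_greatest[OF assms(1)])
  fix x assume "x \<in> A"
  then show "(INF x\<in>A. f x) - c \<le> g x"
    using cINF_lower[OF assms(2) \<open>x \<in> A\<close>] assms(3)[OF \<open>x \<in> A\<close>] by arith
qed

lemma abs_INF_diff_le: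
  fixes f g :: "'a \<Rightarrow> real"
  assumes "A \<noteq> {}" "bdd_below (f ` A)" "bdd_below (g ` A)" "\<And>x. x \<in> A \<Longrightarrow> \<bar>f x - g x\<bar> \<le> c"
  shows "\<bar>(INF x\<in>A. f x) - (INF x\<in>A. g x)\<bar> \<le> c"
  using INF_diff_le[of A f g c] INF_diff_le[of A g f c] assms by (simp add: abs_minus_commute)

lemma abs_L_RCS_diff_le:
  fixes V :: "real^'k^'p"
  assumes "V \<in> orth_frames"
  shows "\<bar>L_RCS V S - L_RCS V T\<bar> \<le> (1 + real CARD('k)) * real CARD('p)^2 * norm (S - T)"
proof -
  have "\<bar>L_RCS V S - L_RCS V T\<bar> = \<bar>trace (S - T) - L_var V (S - T)\<bar>"
    by (simp add: L_RCS_eq L_var_diff trace_sub)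
  also have "\<dots> \<le> real CARD('p) * norm (S - T) + real CARD('k) * real CARD('p)^2 * norm (S - T)"
    using abs_trace_le[of "S - T"] abs_L_var_le[OF assms, of "S - T"] by linarith
  also have "\<dots> \<le> real CARD('p)^2 * norm (S - T) + real CARD('k) * real CARD('p)^2 * norm (S - T)"
  proof -
    have "real CARD('p) * 1 \<le> real CARD('p) * real CARD('p)"
      by (intro mult_left_mono) simp_all
    then show ?thesis by (intro add_right_mono mult_right_mono) (simp_all add: power2_eq_square)
  qed
  finally show ?thesis by (simp add: algebra_simps)
qed

lemma bdd_below_L_RCS: "bdd_below ((\<lambda>W::real^'k^'p. L_RCS W S) ` orth_frames)"
proof (rule bdd_belowI2)
  fix W :: "real^'k^'p" assume "W \<in> orth_frames"
  then show "- ((1 + real CARD('k)) * real CARD('p)^2 * norm S) \<le> L_RCS W S"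
    using abs_L_RCS_diff_le[of W S 0] by (simp add: L_RCS_eq L_var_eq_sum trace_def)
qed

lemma unnormalized_loss_lipschitz:
  fixes V :: "real^'k^'p"
  assumes "\<not> normalized pr" and V: "V \<in> orth_frames"
  shows "\<bar>loss pr V S - loss pr V T\<bar> \<le> 2 * (1 + real CARD('k)) * real CARD('p)^2 * norm (S - T)"
proof -
  define C where "C = (1 + real CARD('k)) * real CARD('p)^2 * norm (S - T)"
  have "C \<ge> 0" by (simp add: C_def)
  have RCS: "\<bar>L_RCS W S - L_RCS W T\<bar> \<le> C" if "W \<in> orth_frames" for W :: "real^'k^'p"
    unfolding C_def by (rule abs_L_RCS_diff_le[OF that])
  have "\<bar>L_var V S - L_var V T\<bar> \<le> real CARD('k) * real CARD('p)^2 * norm (S - T)"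
    using abs_L_var_le[OF V, of "S - T"] by (simp add: L_var_diff)
  also have "\<dots> \<le> C"
    unfolding C_def by (intro mult_right_mono) simp_all
  finally have "\<bar>L_var V S - L_var V T\<bar> \<le> C" .
  moreover have "\<bar>L_reg V S - L_reg V T\<bar> \<le> 2 * C"
  proof -
    have "\<bar>(INF W\<in>orth_frames. L_RCS (W::real^'k^'p) S) - (INF W\<in>orth_frames. L_RCS (W::real^'k^'p) T)\<bar> \<le> C"
      by (rule abs_INF_diff_le) (use V RCS bdd_below_L_RCS in auto)
    then show ?thesis using RCS[OF V] unfolding L_reg_def by linarith
  qed
  ultimately have "\<bar>loss pr V S - loss pr V T\<bar> \<le> 2 * C"
    using assms(1) RCS[OF V] \<open>C \<ge> 0\<close> by (cases pr) (auto simp: abs_minus_commute)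
  then show ?thesis by (simp only: C_def mult.assoc)
qed

lemma isCont_trace: "isCont (trace :: real^'n^'n \<Rightarrow> real) S"
  unfolding isCont_def trace_def[abs_def] by (intro tendsto_intros)

lemma isCont_rescale:
  assumes "trace T \<noteq> 0"
  shows "isCont (rescale pr) T"
  using assms isCont_trace[of T, unfolded isCont_def]
  by (cases "normalized pr") (auto simp: rescale_def[abs_def] isCont_def intro!: tendsto_intros)

lemma eventually_nhds_loss_uniformly_close:
  assumes "trace T \<noteq> 0" and "\<gamma> > 0"
  shows "\<forall>\<^sub>F S in nhds T. \<forall>V::real^'k^'p \<in> orth_frames. \<bar>loss pr V S - loss pr V T\<bar> \<le> \<gamma>"
proof -
  define C where "C = 2 * (1 + real CARD('k)) * real CARD('p)^2"
  have "C > 0" by (simp add: C_def)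
  have "\<forall>\<^sub>F S in nhds T. dist (rescale pr S) (rescale pr T) < \<gamma> / C"
    using isCont_rescale[OF assms(1)] \<open>C > 0\<close> \<open>\<gamma> > 0\<close>
    by (intro tendstoD) (auto simp: isCont_def tendsto_at_iff_tendsto_nhds)
  then show ?thesis
  proof eventually_elim
    case (elim S)
    show ?case
    proof
      fix V :: "real^'k^'p" assume V: "V \<in> orth_frames"
      have "\<bar>loss pr V S - loss pr V T\<bar>
          = \<bar>loss (unnormalized pr) V (rescale pr S) - loss (unnormalized pr) V (rescale pr T)\<bar>"
        by (simp only: loss_rescale[of pr])
      also have "\<dots> \<le> C * norm (rescale pr S - rescale pr T)"
        unfolding C_def by (rule unnormalized_loss_lipschitz[OF not_normalized_unnormalized V])
      also have "\<dots> \<le> \<gamma>"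
        using elim \<open>C > 0\<close> by (simp add: dist_norm field_simps)
      finally show "\<bar>loss pr V S - loss pr V T\<bar> \<le> \<gamma>" .
    qed
  qed
qed

lemma convex_on_loss:
  fixes V :: "real^'k^'p"
  assumes "\<not> normalized pr" and V: "V \<in> orth_frames"
  shows "convex_on UNIV (loss pr V)"
proof (rule convex_onI)
  fix t :: real and S T :: "real^'p^'p" assume t: "0 < t" "t < 1"
  have "(1 - t) * (INF W\<in>orth_frames. L_RCS (W::real^'k^'p) S) + t * (INF W\<in>orth_frames. L_RCS (W::real^'k^'p) T)
      \<le> (INF W\<in>orth_frames. L_RCS (W::real^'k^'p) ((1 - t) *\<^sub>R S + t *\<^sub>R T))"
  proof (rule cINF_greatest)
    show "(orth_frames :: (real^'k^'p) set) \<noteq> {}" using V by auto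
    fix W :: "real^'k^'p" assume "W \<in> orth_frames"
    then show "(1 - t) * (INF W\<in>orth_frames. L_RCS (W::real^'k^'p) S) + t * (INF W\<in>orth_frames. L_RCS (W::real^'k^'p) T)
      \<le> L_RCS W ((1 - t) *\<^sub>R S + t *\<^sub>R T)"
      unfolding L_RCS_convex_comb using t
      by (intro add_mono mult_left_mono cINF_lower bdd_below_L_RCS) auto
  qed
  moreover have "L_var V ((1 - t) *\<^sub>R S + t *\<^sub>R T) = (1 - t) * L_var V S + t * L_var V T"
    by (simp add: L_var_add L_var_scaleR)
  ultimately show "loss pr V ((1 - t) *\<^sub>R S + t *\<^sub>R T) \<le> (1 - t) * loss pr V S + t * loss pr V T"
    using assms(1)
    by (cases pr) (simp_all only: loss.simps normalized.simps L_reg_def L_RCS_convex_comb,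
        simp_all add: algebra_simps)
qed simp

section \<open>Worst-case risk over the uncertainty set\<close>

lemma rescale_second_moment_in_hull:
  assumes "Q \<in> Qset pr Sig"
  shows "rescale pr (second_moment Q) \<in> convex hull (range (\<lambda>e. rescale pr (Sig e)))"
  using assms integral_norm_sq_eq_trace[of Q]
  by (cases "normalized pr") (auto simp: Qset_def Pnorm_def Pset_def rescale_def)

lemma loss_le_worst_domain_loss:
  fixes V :: "real^'k^'p" and Sig :: "'e::finite \<Rightarrow> real^'p^'p"
  assumes V: "V \<in> orth_frames" and Q: "Q \<in> Qset pr Sig"
  shows "loss pr V (second_moment Q) \<le> worst_domain_loss pr Sig V"
proof -
  have "\<forall>S \<in> convex hull (range (\<lambda>e. rescale pr (Sig e))).
          loss (unnormalized pr) V S \<le> worst_domain_loss pr Sig V"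
  proof (rule convex_on_convex_hull_bound)
    show "convex_on (convex hull (range (\<lambda>e. rescale pr (Sig e)))) (loss (unnormalized pr) V)"
      by (rule convex_on_subset[OF convex_on_loss[OF not_normalized_unnormalized V]])
         (simp_all add: convex_convex_hull)
    show "\<forall>S \<in> range (\<lambda>e. rescale pr (Sig e)). loss (unnormalized pr) V S \<le> worst_domain_loss pr Sig V"
      by (auto simp: worst_domain_loss_def simp flip: loss_rescale)
  qed
  then show ?thesis
    using rescale_second_moment_in_hull[OF Q] by (simp add: loss_rescale[of pr])
qed

lemma second_moment_mem_Qset:
  assumes dists: "\<forall>e. centered_L2_dist (P e)" and tr_pos: "\<forall>e. trace (second_moment (P e)) > 0"
  shows "P e \<in> Qset pr (\<lambda>e. second_moment (P e))"
  using assms integral_norm_sq_eq_trace[of "P e"]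
  by (auto simp: Qset_def Pnorm_def Pset_def intro: hull_inc)

lemma worst_risk_eq_worst_domain_loss:
  fixes P :: "'e::finite \<Rightarrow> (real^'p) measure" and V :: "real^'k^'p"
  assumes dists: "\<forall>e. centered_L2_dist (P e)" and tr_pos: "\<forall>e. trace (second_moment (P e)) > 0"
    and V: "V \<in> orth_frames"
  shows "worst_risk pr (\<lambda>e. second_moment (P e)) V = worst_domain_loss pr (\<lambda>e. second_moment (P e)) V"
proof (rule antisym)
  note upper = loss_le_worst_domain_loss[OF V]
  note mem = second_moment_mem_Qset[OF dists tr_pos]
  show "worst_risk pr (\<lambda>e. second_moment (P e)) V \<le> worst_domain_loss pr (\<lambda>e. second_moment (P e)) V"
    unfolding worst_risk_def using mem upper by (intro cSUP_least) blast+
  have "worst_domain_loss pr (\<lambda>e. second_moment (P e)) V \<in> range (\<lambda>e. loss pr V (second_moment (P e)))"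
    unfolding worst_domain_loss_def by (rule Max_in) auto
  then obtain e where e: "worst_domain_loss pr (\<lambda>e. second_moment (P e)) V = loss pr V (second_moment (P e))"
    by auto
  show "worst_domain_loss pr (\<lambda>e. second_moment (P e)) V \<le> worst_risk pr (\<lambda>e. second_moment (P e)) V"
    unfolding worst_risk_def e
    using mem upper by (intro cSUP_upper bdd_aboveI2) auto
qed

section \<open>Stability of minimax solutions\<close>

lemma eventually_nhds_uniform_radius:
  fixes x :: "'i::finite \<Rightarrow> 'a::metric_space"
  assumes "\<And>i. \<forall>\<^sub>F y in nhds (x i). P i y"
  shows "\<exists>\<eta>>0. \<forall>i y. dist y (x i) \<le> \<eta> \<longrightarrow> P i y"
proof -
  have "\<forall>\<^sub>F \<eta> in at_right 0. \<forall>y. dist y (x i) \<le> \<eta> \<longrightarrow> P i y" for i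
  proof -
    obtain d where "d > 0" and "\<And>y. dist y (x i) < d \<Longrightarrow> P i y"
      using assms[of i] unfolding eventually_nhds_metric by blast
    then show ?thesis
      unfolding eventually_at_right_field by (intro exI[of _ d]) auto
  qed
  then have "\<forall>\<^sub>F \<eta> in at_right 0. \<forall>i y. dist y (x i) \<le> \<eta> \<longrightarrow> P i y"
    by (rule eventually_all_finite)
  then obtain b :: real where "b > 0" and b: "\<And>\<eta>. 0 < \<eta> \<Longrightarrow> \<eta> < b \<Longrightarrow> \<forall>i y. dist y (x i) \<le> \<eta> \<longrightarrow> P i y"
    unfolding eventually_at_right_field by auto
  have "\<forall>i y. dist y (x i) \<le> b / 2 \<longrightarrow> P i y" using b[of "b / 2"] \<open>b > 0\<close> by simp
  with \<open>b > 0\<close> show ?thesis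
    by (intro exI[of _ "b / 2"] conjI) simp_all
qed

lemma abs_Max_range_diff_le:
  fixes f g :: "'i::finite \<Rightarrow> real"
  assumes "\<And>i. \<bar>f i - g i\<bar> \<le> c"
  shows "\<bar>(MAX i. f i) - (MAX i. g i)\<bar> \<le> c"
proof -
  have Max_le: "(MAX i. f i) \<le> (MAX i. g i) + c" if "\<And>i. f i \<le> g i + c" for f g :: "'i \<Rightarrow> real"
  proof (rule Max.boundedI)
    fix y assume "y \<in> range f"
    then obtain i where "y = f i" by auto
    moreover have "g i \<le> (MAX i. g i)" by (rule Max_ge) simp_all
    ultimately show "y \<le> (MAX i. g i) + c"
      using that[of i] by linarith
  qed simp_all
  have "(MAX i. f i) \<le> (MAX i. g i) + c" "(MAX i. g i) \<le> (MAX i. f i) + c"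
    using assms by (intro Max_le; smt (verit))+
  then show ?thesis by arith
qed

lemma worst_domain_loss_uniformly_close:
  fixes T :: "'e::finite \<Rightarrow> real^'p^'p"
  assumes "\<And>e. trace (T e) > 0" and "\<gamma> > 0"
  obtains \<eta> where "\<eta> > 0"
    and "\<And>S. \<forall>e. norm (S e - T e) \<le> \<eta> \<Longrightarrow> (\<forall>e. trace (S e) > 0) \<and>
           (\<forall>V::real^'k^'p \<in> orth_frames. \<bar>worst_domain_loss pr S V - worst_domain_loss pr T V\<bar> \<le> \<gamma>)"
proof -
  define close where "close e S \<longleftrightarrow> trace S > 0 \<and>
      (\<forall>V::real^'k^'p \<in> orth_frames. \<bar>loss pr V S - loss pr V (T e)\<bar> \<le> \<gamma>)" for e S
  have "\<forall>\<^sub>F S in nhds (T e). close e S" for e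
    unfolding close_def
  proof (rule eventually_conj)
    show "\<forall>\<^sub>F S in nhds (T e). trace S > 0"
      using isCont_trace[of "T e"] assms(1)[of e]
      by (intro order_tendstoD(1)[of trace]) (auto simp: isCont_def tendsto_at_iff_tendsto_nhds)
    show "\<forall>\<^sub>F S in nhds (T e). \<forall>V::real^'k^'p \<in> orth_frames. \<bar>loss pr V S - loss pr V (T e)\<bar> \<le> \<gamma>"
      by (rule eventually_nhds_loss_uniformly_close) (use assms(1)[of e] assms(2) in auto)
  qed
  then obtain \<eta> where "\<eta> > 0" and \<eta>: "\<And>e S. dist S (T e) \<le> \<eta> \<Longrightarrow> close e S"
    using eventually_nhds_uniform_radius[where x = T and P = close] by blast
  show ?thesis
  proof (rule that[OF \<open>\<eta> > 0\<close>], intro conjI allI ballI)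
    fix S assume "\<forall>e. norm (S e - T e) \<le> \<eta>"
    then have close: "close e (S e)" for e using \<eta> by (simp add: dist_norm)
    then show "trace (S e) > 0" for e by (simp add: close_def)
    show "\<bar>worst_domain_loss pr S V - worst_domain_loss pr T V\<bar> \<le> \<gamma>" if "V \<in> orth_frames" for V :: "real^'k^'p"
      unfolding worst_domain_loss_def
      using close that by (intro abs_Max_range_diff_le) (simp add: close_def)
  qed
qed

lemma minmax_solutions_value_close:
  fixes Vs Vh :: "real^'k^'p"
  assumes "Vs \<in> minmax_solutions pr T" and "Vh \<in> minmax_solutions pr S"
    and "\<forall>V::real^'k^'p \<in> orth_frames. \<bar>worst_domain_loss pr S V - worst_domain_loss pr T V\<bar> \<le> \<gamma>"
  shows "\<bar>worst_domain_loss pr T Vh - worst_domain_loss pr T Vs\<bar> \<le> 2 * \<gamma>"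
proof -
  have "Vs \<in> orth_frames" "Vh \<in> orth_frames"
    and "worst_domain_loss pr T Vs \<le> worst_domain_loss pr T Vh"
    and "worst_domain_loss pr S Vh \<le> worst_domain_loss pr S Vs"
    using assms(1,2) unfolding minmax_solutions_def by auto
  moreover have "\<bar>worst_domain_loss pr S Vh - worst_domain_loss pr T Vh\<bar> \<le> \<gamma>"
    and "\<bar>worst_domain_loss pr S Vs - worst_domain_loss pr T Vs\<bar> \<le> \<gamma>"
    using assms(3) \<open>Vs \<in> orth_frames\<close> \<open>Vh \<in> orth_frames\<close> by auto
  ultimately show ?thesis by arith
qed

lemma worst_risk_of_perturbed_solution:
  fixes P :: "'e::finite \<Rightarrow> (real^'p) measure" and Vstar Vh :: "real^'k^'p"
  defines "Sig \<equiv> \<lambda>e. second_moment (P e)"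
  assumes dists: "\<forall>e. centered_L2_dist (P e)" and tr_pos: "\<forall>e. trace (second_moment (P e)) > 0"
    and Vstar: "Vstar \<in> minmax_solutions pr Sig" and Vh: "Vh \<in> minmax_solutions pr S"
    and close: "\<forall>V::real^'k^'p \<in> orth_frames. \<bar>worst_domain_loss pr S V - worst_domain_loss pr Sig V\<bar> \<le> \<gamma>"
  shows "\<bar>worst_risk pr Sig Vh - worst_risk pr Sig Vstar\<bar> \<le> 2 * \<gamma>"
    and "worst_risk pr Sig Vh \<le> worst_domain_loss pr S Vh + \<gamma>"
proof -
  have "Vstar \<in> orth_frames" "Vh \<in> orth_frames"
    using Vstar Vh by (simp_all add: minmax_solutions_def)
  then have "worst_risk pr Sig Vh = worst_domain_loss pr Sig Vh"
    and "worst_risk pr Sig Vstar = worst_domain_loss pr Sig Vstar"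
    unfolding Sig_def by (simp_all only: worst_risk_eq_worst_domain_loss[OF dists tr_pos])
  then show "\<bar>worst_risk pr Sig Vh - worst_risk pr Sig Vstar\<bar> \<le> 2 * \<gamma>"
    and "worst_risk pr Sig Vh \<le> worst_domain_loss pr S Vh + \<gamma>"
    using minmax_solutions_value_close[OF Vstar Vh close] close \<open>Vh \<in> orth_frames\<close> by auto
qed

lemma risk_deviation_negligible:
  fixes pr :: problem and P :: "'e::finite \<Rightarrow> (real^'p) measure" and Vstar :: "real^'k^'p"
    and Vhat :: "('e \<Rightarrow> nat) \<Rightarrow> ('e \<Rightarrow> nat \<Rightarrow> real^'p) \<Rightarrow> real^'k^'p"
  defines "R \<equiv> worst_risk pr (\<lambda>e. second_moment (P e))"
  assumes dists: "\<forall>e. centered_L2_dist (P e)"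
    and tr_pos: "\<forall>e. trace (second_moment (P e)) > 0"
    and Vstar_sol: "Vstar \<in> minmax_solutions pr (\<lambda>e. second_moment (P e))"
    and Vhat_sol: "\<forall>n d. d \<in> space (sample_space P n) \<and> (\<forall>e. trace (sample_cov (n e) (d e)) > 0)
                     \<longrightarrow> Vhat n d \<in> minmax_solutions pr (\<lambda>e. sample_cov (n e) (d e))"
    and "\<epsilon> > 0"
  shows "asymptotically_negligible P (\<lambda>n d. \<epsilon> < \<bar>R (Vhat n d) - R Vstar\<bar> \<or>
           worst_domain_loss pr (\<lambda>e. sample_cov (n e) (d e)) (Vhat n d) + \<epsilon> < R (Vhat n d))"
proof -
  have "\<And>e. trace (second_moment (P e)) > 0" and "\<epsilon> / 2 > 0"
    using tr_pos \<open>\<epsilon> > 0\<close> by simp_all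
  then obtain \<eta> where "\<eta> > 0" and close: "\<And>S. \<forall>e. norm (S e - second_moment (P e)) \<le> \<eta> \<Longrightarrow>
      (\<forall>e. trace (S e) > 0) \<and> (\<forall>V::real^'k^'p \<in> orth_frames.
         \<bar>worst_domain_loss pr S V - worst_domain_loss pr (\<lambda>e. second_moment (P e)) V\<bar> \<le> \<epsilon> / 2)"
    by (rule worst_domain_loss_uniformly_close[where T = "\<lambda>e. second_moment (P e)" and pr = pr]) (rule that)
  show ?thesis
  proof (rule asymptotically_negligible_mono[OF sample_cov_deviation_negligible[OF dists \<open>\<eta> > 0\<close>]])
    fix n d assume "d \<in> space (sample_space P n)"
      and bad: "\<epsilon> < \<bar>R (Vhat n d) - R Vstar\<bar> \<or>
        worst_domain_loss pr (\<lambda>e. sample_cov (n e) (d e)) (Vhat n d) + \<epsilon> < R (Vhat n d)"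
    show "\<exists>e. \<eta> < norm (sample_cov (n e) (d e) - second_moment (P e))"
    proof (rule ccontr)
      assume "\<not> ?thesis"
      then have "\<forall>e. norm (sample_cov (n e) (d e) - second_moment (P e)) \<le> \<eta>"
        by (simp add: not_less)
      note near = close[OF this]
      then have "Vhat n d \<in> minmax_solutions pr (\<lambda>e. sample_cov (n e) (d e))"
        using Vhat_sol \<open>d \<in> space (sample_space P n)\<close> by blast
      from worst_risk_of_perturbed_solution[OF dists tr_pos Vstar_sol this conjunct2[OF near]] bad \<open>\<epsilon> > 0\<close>
      show False unfolding R_def by linarith
    qed
  qed
qed

theorem mainTheorem7:
  fixes pr :: problem
    and P :: "'e::finite \<Rightarrow> (real^'p) measure"
    and Vstar :: "real^'k^'p"
    and Vhat :: "('e \<Rightarrow> nat) \<Rightarrow> ('e \<Rightarrow> nat \<Rightarrow> real^'p) \<Rightarrow> real^'k^'p"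
  assumes k_le_p: "CARD('k) \<le> CARD('p)"
    and dists: "\<forall>e. centered_L2_dist (P e)"
    and tr_pos: "\<forall>e. trace (second_moment (P e)) > 0"
    and Vstar_sol: "Vstar \<in> minmax_solutions pr (\<lambda>e. second_moment (P e))"
    and unique: "\<forall>V \<in> minmax_solutions pr (\<lambda>e. second_moment (P e)).
                   \<exists>Q :: real^'k^'k. orthogonal_matrix Q \<and> V = Vstar ** Q"
    and Vhat_meas: "\<forall>n. Vhat n \<in> borel_measurable (sample_space P n)"
    and Vhat_sol: "\<forall>n d. d \<in> space (sample_space P n) \<and> (\<forall>e. trace (sample_cov (n e) (d e)) > 0)
                     \<longrightarrow> Vhat n d \<in> minmax_solutions pr (\<lambda>e. sample_cov (n e) (d e))"
  shows "(\<forall>\<epsilon>>0. \<forall>\<delta>>0. \<exists>N. \<forall>n. (\<forall>e. N \<le> n e) \<longrightarrow>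
            measure (sample_space P n)
              {d \<in> space (sample_space P n).
                 \<bar>worst_risk pr (\<lambda>e. second_moment (P e)) (Vhat n d)
                  - worst_risk pr (\<lambda>e. second_moment (P e)) Vstar\<bar> > \<epsilon>} < \<delta>)
       \<and> (\<forall>\<epsilon>>0. \<forall>\<delta>>0. \<exists>N. \<forall>n. (\<forall>e. N \<le> n e) \<longrightarrow>
            measure (sample_space P n)
              {d \<in> space (sample_space P n).
                 worst_risk pr (\<lambda>e. second_moment (P e)) (Vhat n d)
                 > worst_domain_loss pr (\<lambda>e. sample_cov (n e) (d e)) (Vhat n d) + \<epsilon>} < \<delta>)"
proof -
  have prob: "\<And>e. prob_space (P e)" using dists by (simp add: centered_L2_dist_def)
  note negligible = risk_deviation_negligible[OF dists tr_pos Vstar_sol Vhat_sol]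
  show ?thesis
    using asymptotically_negligible_measure[OF prob asymptotically_negligible_mono[OF negligible]]
    by auto
qed

end
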